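(* Let $n$ and $i$ be positive integers with $i<n/3$. Then there exists a partition $\mathfrak p$ of $n$ such that: (1) if $n\neq 4i+2$ and $(n,i)\neq(8,1)$, then for every integer $1\le m\le n$, $m$ is a partial sum of $\mathfrak p$ if and only if $m\notin\{i,\,n-i\}$; (2) if $n=4i+2$ or $(n,i)=(8,1)$, then for every integer $1\le m\le n$, $m$ is a partial sum of $\mathfrak p$ if and only if $m\notin\{i,\,n-i,\,n/2\}$.
   Context: A partition of $n$ is a finite multiset $(a_1,\dots,a_t)$ of positive integers with sum $n$. An integer $m$ is a partial sum of the partition $(a_1,\dots,a_t)$ if $m=a_{j_1}+\cdots+a_{j_\ell}$ for some $\ell\ge1$ and indices $1\le j_1<\dots<j_\ell\le t$. *)

theory Defs
  imports Main "HOL-Library.Multiset"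
begin

definition is_partition :: "nat multiset \<Rightarrow> nat \<Rightarrow> bool" where
  "is_partition p n \<longleftrightarrow> (\<forall>a \<in># p. 0 < a) \<and> sum_mset p = n"

definition partial_sum :: "nat \<Rightarrow> nat multiset \<Rightarrow> bool" where
  "partial_sum m p \<longleftrightarrow> (\<exists>q. q \<subseteq># p \<and> q \<noteq> {#} \<and> sum_mset q = m)"

end

theory Submission
  imports Defs
begin

text \<open>Call a multiset \<open>p\<close> of positive integers with sum \<open>N\<close> an \<open>i\<close>-gap multiset if its
  subsums are exactly \<open>{0..N} - {i, N - i}\<close>. Adding a part \<open>c\<close> with \<open>i < c \<le> N - i\<close> and
  \<open>c + 2 i \<noteq> N\<close> yields an \<open>i\<close>-gap multiset again, since the shifted copy of the subsums fills
  the old gap \<open>N - i\<close> and everything above \<open>N\<close> except \<open>N + c - i\<close>. Starting from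
  \<open>{i + 1, 1, ..., 1}\<close> (sum \<open>2 i\<close>) one reaches every \<open>N\<close> in \<open>3 i + 1 .. 4 i + 1\<close>, and then
  repeatedly adding parts \<open>i + 1\<close> covers every larger \<open>N\<close>, except the residue class of
  \<open>4 i + 2\<close>, which needs one extra base case.\<close>

definition subsums :: "nat multiset \<Rightarrow> nat set" where
  "subsums p = sum_mset ` {q. q \<subseteq># p}"

lemma subsums_empty [simp]: "subsums {#} = {0}"
  by (simp add: subsums_def)

lemma mem_subsums_add_mset:
  "x \<in> subsums (add_mset c p) \<longleftrightarrow> x \<in> subsums p \<or> (c \<le> x \<and> x - c \<in> subsums p)"
proof
  assume "x \<in> subsums (add_mset c p)"
  then obtain q where q: "q \<subseteq># add_mset c p" "x = sum_mset q"
    by (auto simp: subsums_def)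
  show "x \<in> subsums p \<or> (c \<le> x \<and> x - c \<in> subsums p)"
  proof (cases "c \<in># q")
    case True
    then obtain r where "q = add_mset c r"
      by (metis mset_add)
    with q show ?thesis
      by (auto simp: subsums_def)
  next
    case False
    with q have "q \<subseteq># p"
      by (metis diff_single_trivial subset_eq_diff_conv add_mset_add_single)
    with q show ?thesis
      by (auto simp: subsums_def)
  qed
next
  assume "x \<in> subsums p \<or> (c \<le> x \<and> x - c \<in> subsums p)"
  then show "x \<in> subsums (add_mset c p)"
  proof
    assume "x \<in> subsums p"
    then obtain q where "q \<subseteq># p" "x = sum_mset q"
      by (auto simp: subsums_def)
    moreover have "q \<subseteq># add_mset c p"
      using calculation(1) by (metis add_mset_add_single mset_subset_eq_add_left subset_mset.order_trans)
    ultimately show ?thesis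
      unfolding subsums_def by blast
  next
    assume x: "c \<le> x \<and> x - c \<in> subsums p"
    then obtain q where "q \<subseteq># p" "x - c = sum_mset q"
      by (auto simp: subsums_def)
    then have "add_mset c q \<subseteq># add_mset c p" "x = sum_mset (add_mset c q)"
      using x by auto
    then show ?thesis
      unfolding subsums_def by blast
  qed
qed

lemma subsums_replicate_one: "subsums (replicate_mset k 1) = {0..k}"
proof (induction k)
  case (Suc k)
  show ?case
    unfolding set_eq_iff replicate_mset_Suc mem_subsums_add_mset Suc by auto
qed simp

definition gap_multiset :: "nat \<Rightarrow> nat multiset \<Rightarrow> bool" where
  "gap_multiset i p \<longleftrightarrow>
     (\<forall>a \<in># p. 0 < a) \<and> subsums p = {0..sum_mset p} - {i, sum_mset p - i}"

lemma gap_interval_shift_union_iff: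
  fixes N c i x :: nat
  assumes "i < c"
    and "N = 2 * i \<and> c \<le> 2 * i + 1 \<or> c + i \<le> N \<and> c + 2 * i \<noteq> N"
  shows "(x \<in> {0..N} - {i, N - i} \<or> (c \<le> x \<and> x - c \<in> {0..N} - {i, N - i}))
           \<longleftrightarrow> x \<in> {0..N + c} - {i, N + c - i}"
proof (cases "c \<le> x")
  case True
  then obtain y where "x = y + c"
    by (metis add.commute le_add_diff_inverse)
  then show ?thesis
    using assms by auto
next
  case False
  then show ?thesis
    using assms by auto
qed

lemma gap_multiset_add_mset:
  assumes p: "gap_multiset i p" and "i < c"
    \<comment> \<open>for \<open>sum_mset p = 2 * i\<close> the two gaps coincide, which weakens the constraint on \<open>c\<close>\<close>
    and c: "sum_mset p = 2 * i \<and> c \<le> 2 * i + 1 \<or> c + i \<le> sum_mset p \<and> c + 2 * i \<noteq> sum_mset p"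
  shows "gap_multiset i (add_mset c p)"
proof -
  have "x \<in> subsums (add_mset c p) \<longleftrightarrow> x \<in> {0..sum_mset p + c} - {i, sum_mset p + c - i}" for x
    using p gap_interval_shift_union_iff[OF \<open>i < c\<close> c, of x]
    unfolding mem_subsums_add_mset gap_multiset_def by simp
  then have "subsums (add_mset c p) = {0..sum_mset (add_mset c p)} - {i, sum_mset (add_mset c p) - i}"
    by (simp add: set_eq_iff add.commute)
  with p \<open>i < c\<close> show ?thesis
    by (simp add: gap_multiset_def)
qed

lemma gap_multiset_base:
  assumes "0 < i"
  shows "gap_multiset i (add_mset (i + 1) (replicate_mset (i - 1) 1))"
  using assms unfolding gap_multiset_def set_eq_iff mem_subsums_add_mset subsums_replicate_one
  by auto

lemma subsums_three_copies:
  assumes "0 < i"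
  shows "subsums (add_mset (i + 1) (add_mset (i + 1) (add_mset (i + 1) (replicate_mset (i - 1) 1))))
           = {0..4 * i + 2} - {i, 2 * i + 1, 3 * i + 2}"
proof -
  define q where "q = add_mset (i + 1) (add_mset (i + 1) (replicate_mset (i - 1) 1))"
  have "gap_multiset i q"
    unfolding q_def by (rule gap_multiset_add_mset[OF gap_multiset_base[OF assms]]) (use assms in auto)
  moreover have "sum_mset q = 3 * i + 1"
    using assms by (simp add: q_def)
  ultimately have q: "subsums q = {0..3 * i + 1} - {i, 2 * i + 1}"
    by (simp add: gap_multiset_def)
  have "x \<in> subsums (add_mset (i + 1) q) \<longleftrightarrow> x \<in> {0..4 * i + 2} - {i, 2 * i + 1, 3 * i + 2}" for x
  proof (cases "i + 1 \<le> x")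
    case True
    then obtain y where "x = y + (i + 1)"
      by (metis add.commute le_add_diff_inverse)
    then show ?thesis
      unfolding mem_subsums_add_mset q by auto
  next
    case False
    then show ?thesis
      unfolding mem_subsums_add_mset q by auto
  qed
  then show ?thesis
    unfolding q_def[symmetric] by blast
qed

lemma subsums_2_3_3: "subsums {#2, 3, 3#} = {0..8} - {1, 4, 7}"
  by (auto simp: set_eq_iff mem_subsums_add_mset)

lemma gap_multiset_exists:
  assumes "0 < i" "3 * i < N" "N \<noteq> 4 * i + 2" "(N, i) \<noteq> (8, 1)"
  shows "\<exists>p. gap_multiset i p \<and> sum_mset p = N"
  using assms(2-4)
proof (induction N rule: less_induct)
  case (less N)
  define B where "B = add_mset (i + 1) (replicate_mset (i - 1) 1)"
  have B: "gap_multiset i B" "sum_mset B = 2 * i"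
    using gap_multiset_base[OF \<open>0 < i\<close>] \<open>0 < i\<close> by (simp_all add: B_def)
  \<comment> \<open>\<open>5 i + 3\<close> (resp. \<open>10\<close> for \<open>i = 1\<close>) is the base of the residue class of \<open>4 i + 2\<close>\<close>
  consider "N \<le> 4 * i + 1" | "2 \<le> i" "N = 5 * i + 3" | "i = 1" "N = 10"
    | "4 * i + 3 \<le> N" "N - (i + 1) \<noteq> 4 * i + 2" "(N - (i + 1), i) \<noteq> (8, 1)"
    using less.prems \<open>0 < i\<close> by fastforce
  then show ?case
  proof cases
    case 1
    then show ?thesis
      using B less.prems
      by (intro exI[of _ "add_mset (N - 2 * i) B"] conjI gap_multiset_add_mset) auto
  next
    case 2
    then show ?thesis
      using B
      by (intro exI[of _ "add_mset (2 * i + 1) (add_mset (i + 2) B)"] conjI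
          gap_multiset_add_mset) auto
  next
    case 3
    then show ?thesis
      using B
      by (intro exI[of _ "add_mset (i + 2) (add_mset (i + 1) (add_mset (i + 2) B))"] conjI
          gap_multiset_add_mset) auto
  next
    case 4
    then have "3 * i < N - (i + 1)"
      by linarith
    then obtain p where "gap_multiset i p" "sum_mset p = N - (i + 1)"
      using less.IH[of "N - (i + 1)"] 4 \<open>0 < i\<close> by auto
    with 4 show ?thesis
      by (intro exI[of _ "add_mset (i + 1) p"] conjI gap_multiset_add_mset) auto
  qed
qed

lemma partial_sum_iff_mem_subsums:
  assumes "0 < m"
  shows "partial_sum m p \<longleftrightarrow> m \<in> subsums p"
  using assms by (force simp: partial_sum_def subsums_def)

lemma partition_with_subsums:
  assumes "\<forall>a \<in># p. 0 < a" "sum_mset p = n" "subsums p = {0..n} - X"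
  shows "is_partition p n \<and> (\<forall>m. 1 \<le> m \<and> m \<le> n \<longrightarrow> (partial_sum m p \<longleftrightarrow> m \<notin> X))"
  using assms by (auto simp: is_partition_def partial_sum_iff_mem_subsums)

theorem lemma2p1:
  fixes n i :: nat
  assumes "0 < i" and "0 < n" and "3 * i < n"
  shows "\<exists>p. is_partition p n \<and>
    ((n \<noteq> 4 * i + 2 \<and> (n, i) \<noteq> (8, 1)) \<longrightarrow>
       (\<forall>m. 1 \<le> m \<and> m \<le> n \<longrightarrow> (partial_sum m p \<longleftrightarrow> m \<notin> {i, n - i}))) \<and>
    ((n = 4 * i + 2 \<or> (n, i) = (8, 1)) \<longrightarrow>
       (\<forall>m. 1 \<le> m \<and> m \<le> n \<longrightarrow> (partial_sum m p \<longleftrightarrow> m \<notin> {i, n - i} \<and> 2 * m \<noteq> n)))"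
proof -
  let ?X = "{m. m \<in> {i, n - i} \<or> 2 * m = n}"
  consider "n = 4 * i + 2" | "(n, i) = (8, 1)" | "n \<noteq> 4 * i + 2" "(n, i) \<noteq> (8, 1)"
    by blast
  then show ?thesis
  proof cases
    case 1
    let ?p = "add_mset (i + 1) (add_mset (i + 1) (add_mset (i + 1) (replicate_mset (i - 1) 1)))"
    have "{i, 2 * i + 1, 3 * i + 2} = ?X"
      using 1 by auto
    then have "is_partition ?p n \<and> (\<forall>m. 1 \<le> m \<and> m \<le> n \<longrightarrow> (partial_sum m ?p \<longleftrightarrow> m \<notin> ?X))"
      using 1 \<open>0 < i\<close> subsums_three_copies[OF \<open>0 < i\<close>] by (intro partition_with_subsums) auto
    with 1 show ?thesis
      by auto
  next
    case 2
    have "{1, 4, 7} = ?X"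
      using 2 by auto
    then have "is_partition {#2, 3, 3#} n \<and>
        (\<forall>m. 1 \<le> m \<and> m \<le> n \<longrightarrow> (partial_sum m {#2, 3, 3#} \<longleftrightarrow> m \<notin> ?X))"
      using 2 subsums_2_3_3 by (intro partition_with_subsums) auto
    with 2 show ?thesis
      by auto
  next
    case 3
    then obtain p where "gap_multiset i p" "sum_mset p = n"
      using gap_multiset_exists assms by blast
    then have "is_partition p n \<and> (\<forall>m. 1 \<le> m \<and> m \<le> n \<longrightarrow> (partial_sum m p \<longleftrightarrow> m \<notin> {i, n - i}))"
      by (intro partition_with_subsums) (auto simp: gap_multiset_def)
    with 3 show ?thesis
      by auto
  qed
qed

end
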